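(* For real $\alpha,\beta$, the inequalities $H_{\alpha }(\cosh x) <\frac{\sinh x}{x}<H_{\beta }(\cosh x)$ hold for all $x\in(0,\infty)$ if and only if $\alpha \leq 0$ and $\beta \geq 3/5$.
   Context: For $t>0$ define $H_{r}(t) =\left( \frac{\sqrt{8+t^{2r}}+t^{r}}{4}\right) ^{1/r}$ if $r\neq 0$ and $H_{0}(t) =t^{1/3}$. *)

theory Defs
  imports Complex_Main
begin

definition H :: "real \<Rightarrow> real \<Rightarrow> real" where
  "H r t = (if r = 0 then t powr (1/3)
            else ((sqrt (8 + t powr (2*r)) + t powr r) / 4) powr (1/r))"

end

(*
  Write s = sinh x / x and c = cosh x. Since H r c ^ r is the positive root u of
  2 u^2 - c^r u = 1, the inequality s < H r c (for r > 0), resp. H r c < s (for r < 0),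
  is equivalent to 2 s^r - s^-r < c^r.

  For r = 0 the lower bound is Lazarevic's inequality c^(1/3) < s, obtained by differentiating
  ln s - (ln c)/3. It gives every r < 0: with w = c^(r/3) we get s^r < w, and
  u \<mapsto> 2u - 1/u is increasing while 2w - 1/w \<le> w^3 = c^r, which is (w^2 - 1)^2 \<ge> 0.

  The upper bound at r = 3/5 comes from differentiating (3/5) ln (s c) - ln (2 s^(6/5) - 1):
  after Bernoulli's inequality s^(6/5) \<ge> (6s - 1)/5, positivity of the derivative becomes an
  inequality between hyperbolic functions whose Taylor coefficients are all nonnegative.
  Bernoulli's inequality also gives 2u^k - u^-k \<le> (2u - 1/u)^k for u, k \<ge> 1, which carries
  the bound over to all r \<ge> 3/5.

  Sharpness: for a > 0 the lower bound fails for large x, where c^a \<ge> 2 s^a; for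
  0 < b < 3/5 the upper bound fails near 0, because 2 s^(2b) - (s c)^b - 1 behaves like
  b (3 - 5b) x^4 / 45; and b \<le> 0 contradicts the lower bound.
*)

theory Submission
  imports Defs "HOL-Real_Asymp.Real_Asymp" "HOL-Analysis.Convex"
begin

section \<open>Hyperbolic inequalities by monotonicity\<close>

lemma pos_if_deriv_pos_and_tendsto_0_at_right:
  fixes f f' :: "real \<Rightarrow> real"
  assumes deriv: "\<And>x. 0 < x \<Longrightarrow> (f has_real_derivative f' x) (at x)"
    and deriv_pos: "\<And>x. 0 < x \<Longrightarrow> 0 < f' x"
    and lim: "(f \<longlongrightarrow> 0) (at_right 0)" and "0 < x"
  shows "0 < f x"
proof -
  have mono: "f a < f b" if "0 < a" "a < b" for a b
    using that deriv deriv_pos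
    by (intro DERIV_pos_imp_increasing[OF \<open>a < b\<close>]) (meson less_le_trans)
  have "eventually (\<lambda>t. t \<in> {0<..<x/2}) (at_right (0::real))"
    by (rule eventually_at_right_real) (use \<open>0 < x\<close> in simp)
  then have "eventually (\<lambda>t. f t \<le> f (x/2)) (at_right 0)"
    by eventually_elim (use mono in \<open>auto intro: less_imp_le\<close>)
  then have "0 \<le> f (x/2)"
    by (intro tendsto_upperbound[OF lim]) simp_all
  also have "f (x/2) < f x"
    using \<open>0 < x\<close> by (intro mono) auto
  finally show ?thesis .
qed

lemma cosh_real_gt_1: "x \<noteq> 0 \<Longrightarrow> 1 < cosh (x::real)"
  using cosh_real_ge_1[of x] cosh_real_one_iff[of x] by linarith

lemma less_sinh_real:
  fixes x :: real assumes "0 < x"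
  shows "x < sinh x"
proof -
  have "0 < sinh x - x"
  proof (rule pos_if_deriv_pos_and_tendsto_0_at_right[OF _ _ _ assms])
    show "((\<lambda>x. sinh x - x) has_real_derivative cosh y - 1) (at y)" for y :: real
      by (auto intro!: derivative_eq_intros)
    show "0 < cosh y - 1" if "0 < y" for y :: real
      using cosh_real_gt_1[of y] that by simp
    show "((\<lambda>x::real. sinh x - x) \<longlongrightarrow> 0) (at_right 0)"
      by real_asymp
  qed
  then show ?thesis by simp
qed

lemma sinh_less_mult_cosh_real:
  fixes x :: real assumes "0 < x"
  shows "sinh x < x * cosh x"
proof -
  have "0 < x * cosh x - sinh x"
  proof (rule pos_if_deriv_pos_and_tendsto_0_at_right[OF _ _ _ assms])
    show "((\<lambda>x. x * cosh x - sinh x) has_real_derivative y * sinh y) (at y)" for y :: real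
      by (auto intro!: derivative_eq_intros)
    show "0 < y * sinh y" if "0 < y" for y :: real
      using that by simp
    show "((\<lambda>x::real. x * cosh x - sinh x) \<longlongrightarrow> 0) (at_right 0)"
      by real_asymp
  qed
  then show ?thesis by simp
qed

lemma three_sinh_cosh_less_real:
  fixes x :: real assumes "0 < x"
  shows "3 * sinh x * cosh x < x * (2 * (cosh x)\<^sup>2 + 1)"
proof -
  have "0 < x * (2 * (cosh x)\<^sup>2 + 1) - 3 * sinh x * cosh x"
  proof (rule pos_if_deriv_pos_and_tendsto_0_at_right[OF _ _ _ assms])
    show "((\<lambda>x. x * (2 * (cosh x)\<^sup>2 + 1) - 3 * sinh x * cosh x)
            has_real_derivative 4 * sinh y * (y * cosh y - sinh y)) (at y)" for y :: real
      using cosh_square_eq[of y, unfolded power2_eq_square]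
      by (auto intro!: derivative_eq_intros simp: power2_eq_square algebra_simps)
    show "0 < 4 * sinh y * (y * cosh y - sinh y)" if "0 < y" for y :: real
      using that sinh_less_mult_cosh_real[OF that] by simp
    show "((\<lambda>x::real. x * (2 * (cosh x)\<^sup>2 + 1) - 3 * sinh x * cosh x) \<longlongrightarrow> 0) (at_right 0)"
      by real_asymp
  qed
  then show ?thesis by simp
qed

section \<open>An inequality with nonnegative Taylor coefficients\<close>

lemma sums_exp_mult: "(\<lambda>n. k^n * (x^n / fact n)) sums exp (k * x :: real)"
  using exp_converges[of "k * x"] by (simp add: power_mult_distrib field_simps)

lemma sums_times_x:
  fixes a :: "nat \<Rightarrow> real"
  assumes "(\<lambda>n. a n * (x^n / fact n)) sums S"
  shows "(\<lambda>n. real n * a (n - 1) * (x^n / fact n)) sums (x * S)"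
proof -
  define b where "b = (\<lambda>n. real n * a (n - 1) * (x^n / fact n))"
  have "(\<lambda>n. b (Suc n)) = (\<lambda>n. x * (a n * (x^n / fact n)))"
    by (simp add: b_def fun_eq_iff field_simps del: of_nat_Suc)
  then have "(\<lambda>n. b (Suc n)) sums (x * S)"
    using sums_mult[OF assms, of x] by simp
  then have "b sums (x * S + b 0)"
    by (simp only: sums_Suc_iff)
  then show ?thesis
    by (simp add: b_def)
qed

lemma sums_x_exp_mult: "(\<lambda>n. real n * k^(n-1) * (x^n / fact n)) sums (x * exp (k * x :: real))"
  using sums_times_x[OF sums_exp_mult] .

lemma sums_x2_exp_mult:
  "(\<lambda>n. real n * (real (n-1) * k^(n-2)) * (x^n / fact n)) sums (x^2 * exp (k * x :: real))"
  using sums_times_x[OF sums_x_exp_mult, of k x]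
  by (simp add: power2_eq_square mult.assoc numeral_2_eq_2)

lemma sums_pos_if_coeffs_nonneg:
  fixes x :: real
  assumes "(\<lambda>n. c n * (x^n / fact n)) sums S" and "0 < x"
    and "\<And>n. 0 \<le> c n" and "0 < c i"
  shows "0 < S"
proof -
  have "S = (\<Sum>n. c n * (x^n / fact n))"
    using assms(1) by (rule sums_unique)
  also have "0 < \<dots>"
    using assms by (intro suminf_pos2[where i=i]) (auto simp: sums_summable)
  finally show ?thesis .
qed

(* The coefficient of x^n / n! in the expansion of the difference of the two sides of
   key_sinh_cosh_inequality into the exponentials exp (k x), x exp (k x) and x^2 exp (k x). *)
definition key_taylor_coeff :: "nat \<Rightarrow> real" where
  "key_taylor_coeff n = (3/2) * (3^n - 1 - (-1)^n + (-3)^n) - 6 * real n * (1 - (-1)^(n-1))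
     + (3/4) * real n * (2^(n-1) - (-2)^(n-1)) + 2 * real n * real (n-1) * 0^(n-2)
     - (5/2) * real n * real (n-1) * (2^(n-2) + (-2)^(n-2))"

lemma key_taylor_coeff_odd: "key_taylor_coeff (2*m+1) = 0"
  by (cases m) (simp_all add: key_taylor_coeff_def power_add power_mult)

lemma key_taylor_coeff_even:
  "key_taylor_coeff (2*m+2) = 27 * 9^m - 27 - 24 * real m - (real m + 1) * (20 * real m + 4) * 4^m
     + (if m = 0 then 4 else 0)"
proof -
  have "a^(2*k) = (a^2)^k" "a^(k*2) = (a^2)^k" for a :: real and k
    by (simp_all add: power_mult[symmetric] mult.commute)
  then show ?thesis
    by (cases m) (simp_all add: key_taylor_coeff_def power_add algebra_simps)
qed

lemma nine_power_dominates:
  fixes m :: nat assumes "3 \<le> m"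
  shows "27 + 24 * m + (m + 1) * (20 * m + 4) * 4^m < 27 * 9^m"
  using assms
proof (induction m rule: nat_induct_at_least)
  case base
  then show ?case by simp
next
  case (Suc m)
  have "4 * ((m + 2) * (20 * m + 24)) \<le> 9 * ((m + 1) * (20 * m + 4))"
    using \<open>3 \<le> m\<close> by (auto dest!: le_Suc_ex simp: algebra_simps)
  then have "4 * ((m + 2) * (20 * m + 24)) * 4^m \<le> 9 * ((m + 1) * (20 * m + 4)) * 4^m"
    by simp
  then have "27 + 24 * Suc m + (Suc m + 1) * (20 * Suc m + 4) * 4^Suc m
      < 9 * (27 + 24 * m + (m + 1) * (20 * m + 4) * 4^m)"
    by (simp add: algebra_simps)
  also have "\<dots> < 27 * 9^Suc m"
    using Suc.IH by simp
  finally show ?case .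
qed

lemma key_taylor_coeff_nonneg: "0 \<le> key_taylor_coeff n"
proof (cases "even n")
  case True
  then obtain j where "n = 2*j" by (auto elim: evenE)
  show ?thesis
  proof (cases j)
    case 0
    then show ?thesis using \<open>n = 2*j\<close> by (simp add: key_taylor_coeff_def)
  next
    case (Suc m)
    then have n: "n = 2*m+2" using \<open>n = 2*j\<close> by simp
    consider "m \<le> 2" | "3 \<le> m" by linarith
    then show ?thesis
    proof cases
      case 1
      then have "m = 0 \<or> m = 1 \<or> m = 2" by auto
      then show ?thesis unfolding n key_taylor_coeff_even by auto
    next
      case 2
      have "real (27 + 24 * m + (m + 1) * (20 * m + 4) * 4^m) < real (27 * 9^m)"
        using nine_power_dominates[OF 2] by (simp only: of_nat_less_iff)
      then have "27 + 24 * real m + (real m + 1) * (20 * real m + 4) * 4^m < 27 * 9^m"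
        by (simp only: of_nat_add of_nat_mult of_nat_power of_nat_numeral of_nat_1)
      then show ?thesis unfolding n key_taylor_coeff_even by simp
    qed
  qed
next
  case False
  then obtain m where "n = 2*m+1" by (auto elim: oddE)
  then show ?thesis using key_taylor_coeff_odd by simp
qed

lemma key_sinh_cosh_inequality:
  fixes x :: real assumes "0 < x"
  shows "5 * x * (x * ((sinh x)\<^sup>2 + (cosh x)\<^sup>2) - sinh x * cosh x)
           < 2 * (6 * sinh x - x) * (sinh x * cosh x - x)"
proof -
  define t where "t = (\<lambda>n. x^n / fact n)"
  define E where "E = exp x"
  let ?series = "\<lambda>n. (3/2) * ((3^n * t n - 1^n * t n) - ((-1)^n * t n - (-3)^n * t n))
       - 6 * (real n * 1^(n-1) * t n - real n * (-1)^(n-1) * t n)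
       + (3/4) * (real n * 2^(n-1) * t n - real n * (-2)^(n-1) * t n)
       + 2 * (real n * (real (n-1) * 0^(n-2)) * t n)
       - (5/2) * (real n * (real (n-1) * 2^(n-2)) * t n + real n * (real (n-1) * (-2)^(n-2)) * t n)"
  let ?sum = "(3/2) * ((exp (3*x) - exp (1*x)) - (exp ((-1)*x) - exp ((-3)*x)))
       - 6 * (x * exp (1*x) - x * exp ((-1)*x))
       + (3/4) * (x * exp (2*x) - x * exp ((-2)*x))
       + 2 * (x^2 * exp (0*x))
       - (5/2) * (x^2 * exp (2*x) + x^2 * exp ((-2)*x))"
  have exps: "exp (3*x) = E^3" "exp (1*x) = E" "exp ((-1)*x) = 1/E"
    "exp ((-3)*x) = 1/E^3" "exp (2*x) = E^2" "exp ((-2)*x) = 1/E^2" "exp (0*x) = 1"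
    unfolding E_def by (simp_all add: exp_of_nat_mult[symmetric] exp_minus field_simps)
  have hyperbolic: "sinh x = (E - 1/E)/2" "cosh x = (E + 1/E)/2"
    unfolding E_def by (simp_all add: sinh_field_def cosh_field_def exp_minus field_simps)
  have "0 < E"
    unfolding E_def by simp
  have "?series sums ?sum"
    unfolding t_def
    by (intro sums_add sums_diff sums_mult sums_exp_mult sums_x_exp_mult sums_x2_exp_mult)
  moreover have "(\<lambda>n. key_taylor_coeff n * (x^n / fact n)) = ?series"
    unfolding t_def key_taylor_coeff_def by (simp add: fun_eq_iff algebra_simps)
  moreover have "2 * (6 * sinh x - x) * (sinh x * cosh x - x)
       - 5 * x * (x * ((sinh x)\<^sup>2 + (cosh x)\<^sup>2) - sinh x * cosh x) = ?sum"
    using \<open>0 < E\<close> unfolding exps hyperbolic by (simp add: field_simps power2_eq_square power3_eq_cube)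
  ultimately have "(\<lambda>n. key_taylor_coeff n * (x^n / fact n)) sums
      (2 * (6 * sinh x - x) * (sinh x * cosh x - x)
       - 5 * x * (x * ((sinh x)\<^sup>2 + (cosh x)\<^sup>2) - sinh x * cosh x))"
    by simp
  from sums_pos_if_coeffs_nonneg[OF this assms key_taylor_coeff_nonneg, of 8]
  show ?thesis by (simp add: key_taylor_coeff_def)
qed

section \<open>Comparison with H\<close>

lemma less_quadratic_root_iff:
  fixes u v :: real assumes "0 < u"
  shows "u < (sqrt (8 + v\<^sup>2) + v) / 4 \<longleftrightarrow> 2 * u - 1 / u < v"
proof -
  have "2 * u - 1 / u < v \<longleftrightarrow> 2 * u\<^sup>2 - u * v < 1"
    using assms by (simp add: field_simps power2_eq_square)
  also have "\<dots> \<longleftrightarrow> 4 * u - v < sqrt (8 + v\<^sup>2)"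
  proof (cases "4 * u - v < 0")
    case True
    then have "u * (2 * u - v) < 0"
      using assms by (intro mult_pos_neg) auto
    then have "2 * u\<^sup>2 - u * v < 1"
      by (simp add: power2_eq_square algebra_simps)
    moreover have "0 \<le> sqrt (8 + v\<^sup>2)"
      by simp
    ultimately show ?thesis
      using True by linarith
  next
    case False
    have "4 * u - v < sqrt (8 + v\<^sup>2) \<longleftrightarrow> (4 * u - v)\<^sup>2 < 8 + v\<^sup>2"
      using False real_sqrt_less_iff[of "(4 * u - v)\<^sup>2" "8 + v\<^sup>2"] by simp
    moreover have "(4 * u - v)\<^sup>2 = 8 * (2 * u\<^sup>2 - u * v) + v\<^sup>2"
      by (simp add: power2_eq_square algebra_simps)
    ultimately show ?thesis
      by argo
  qed
  finally show ?thesis by argo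
qed

lemma H_eq_root:
  assumes "r \<noteq> 0" and "0 < t"
  shows "H r t = ((sqrt (8 + (t powr r)\<^sup>2) + t powr r) / 4) powr (1 / r)"
proof -
  have "t powr (2 * r) = (t powr r)\<^sup>2"
    using assms by (simp add: power2_eq_square flip: powr_add)
  then show ?thesis
    using assms by (simp add: H_def)
qed

lemma quadratic_root_pos: "0 < (sqrt (8 + v\<^sup>2) + v) / (4::real)"
proof -
  have "\<bar>v\<bar> < sqrt (8 + v\<^sup>2)"
    by (rule real_less_rsqrt) simp
  then have "0 < sqrt (8 + v\<^sup>2) + v"
    using abs_ge_minus_self[of v] by linarith
  then show ?thesis
    by simp
qed

lemma less_powr_inverse_iff:
  fixes r s M :: real assumes "0 < r" "0 < s" "0 < M"
  shows "s < M powr (1 / r) \<longleftrightarrow> s powr r < M"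
proof -
  have "s < M powr (1 / r) \<longleftrightarrow> ln s < ln (M powr (1 / r))"
    using assms by (intro ln_less_cancel_iff[symmetric]) auto
  also have "\<dots> \<longleftrightarrow> ln (s powr r) < ln M"
    using assms by (simp add: ln_powr field_simps mult.commute)
  also have "\<dots> \<longleftrightarrow> s powr r < M"
    using assms by (intro ln_less_cancel_iff) auto
  finally show ?thesis .
qed

lemma powr_inverse_less_iff:
  fixes r s M :: real assumes "r < 0" "0 < s" "0 < M"
  shows "M powr (1 / r) < s \<longleftrightarrow> s powr r < M"
proof -
  have "M powr (1 / r) < s \<longleftrightarrow> ln (M powr (1 / r)) < ln s"
    using assms by (intro ln_less_cancel_iff[symmetric]) auto
  also have "\<dots> \<longleftrightarrow> ln (s powr r) < ln M"
    using assms by (simp add: ln_powr field_simps mult.commute)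
  also have "\<dots> \<longleftrightarrow> s powr r < M"
    using assms by (intro ln_less_cancel_iff) auto
  finally show ?thesis .
qed

lemma less_H_iff:
  assumes "0 < r" "0 < s" "0 < t"
  shows "s < H r t \<longleftrightarrow> 2 * s powr r - 1 / s powr r < t powr r"
proof -
  have "r \<noteq> 0" using assms by simp
  have "s < H r t \<longleftrightarrow> s powr r < (sqrt (8 + (t powr r)\<^sup>2) + t powr r) / 4"
    unfolding H_eq_root[OF \<open>r \<noteq> 0\<close> \<open>0 < t\<close>] using assms by (intro less_powr_inverse_iff quadratic_root_pos)
  also have "\<dots> \<longleftrightarrow> 2 * s powr r - 1 / s powr r < t powr r"
    using assms by (intro less_quadratic_root_iff) simp
  finally show ?thesis .
qed

lemma H_less_iff:
  assumes "r < 0" "0 < s" "0 < t"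
  shows "H r t < s \<longleftrightarrow> 2 * s powr r - 1 / s powr r < t powr r"
proof -
  have "r \<noteq> 0" using assms by simp
  have "H r t < s \<longleftrightarrow> s powr r < (sqrt (8 + (t powr r)\<^sup>2) + t powr r) / 4"
    unfolding H_eq_root[OF \<open>r \<noteq> 0\<close> \<open>0 < t\<close>] using assms by (intro powr_inverse_less_iff quadratic_root_pos)
  also have "\<dots> \<longleftrightarrow> 2 * s powr r - 1 / s powr r < t powr r"
    using assms by (intro less_quadratic_root_iff) simp
  finally show ?thesis .
qed

section \<open>The lower bound\<close>

lemma cosh_powr_one_third_less_sinh_div:
  fixes x :: real assumes "0 < x"
  shows "cosh x powr (1/3) < sinh x / x"
proof -
  have "0 < ln (sinh x) - ln x - ln (cosh x) / 3"
  proof (rule pos_if_deriv_pos_and_tendsto_0_at_right[OF _ _ _ assms])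
    fix y :: real assume "0 < y"
    have "cosh y / sinh y - 1 / y - sinh y / cosh y / 3
        = (y * (2 * (cosh y)\<^sup>2 + 1) - 3 * sinh y * cosh y) / (3 * y * sinh y * cosh y)"
      using \<open>0 < y\<close> by (simp add: field_simps power2_eq_square) (use cosh_square_eq[of y] in algebra)
    moreover have "((\<lambda>x. ln (sinh x) - ln x - ln (cosh x) / 3) has_real_derivative
        cosh y / sinh y - 1 / y - sinh y / cosh y / 3) (at y)"
      using \<open>0 < y\<close> by (auto intro!: derivative_eq_intros)
    ultimately show "((\<lambda>x. ln (sinh x) - ln x - ln (cosh x) / 3) has_real_derivative
        (y * (2 * (cosh y)\<^sup>2 + 1) - 3 * sinh y * cosh y) / (3 * y * sinh y * cosh y)) (at y)"
      by simp
    show "0 < (y * (2 * (cosh y)\<^sup>2 + 1) - 3 * sinh y * cosh y) / (3 * y * sinh y * cosh y)"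
      using \<open>0 < y\<close> three_sinh_cosh_less_real[OF \<open>0 < y\<close>] by simp
  next
    show "((\<lambda>x::real. ln (sinh x) - ln x - ln (cosh x) / 3) \<longlongrightarrow> 0) (at_right 0)"
      by real_asymp
  qed
  then have "ln (cosh x) / 3 < ln (sinh x / x)"
    using assms by (simp add: ln_div)
  then have "exp (ln (cosh x) / 3) < sinh x / x"
    using assms by (metis exp_less_mono exp_ln divide_pos_pos sinh_real_pos_iff)
  then show ?thesis
    by (simp add: powr_def)
qed

lemma H_less_sinh_div_of_nonpos:
  fixes a x :: real assumes "a \<le> 0" and "0 < x"
  shows "H a (cosh x) < sinh x / x"
proof (cases "a = 0")
  case True
  then show ?thesis
    using cosh_powr_one_third_less_sinh_div[OF \<open>0 < x\<close>] by (simp add: H_def)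
next
  case False
  with \<open>a \<le> 0\<close> have "a < 0" by simp
  define s where "s = sinh x / x"
  define c where "c = cosh x"
  define u where "u = s powr a"
  define w where "w = c powr (a / 3)"
  have "0 < s" "1 < c"
    using \<open>0 < x\<close> cosh_real_gt_1[of x] by (auto simp: s_def c_def)
  have "s powr a < (c powr (1/3)) powr a"
    using \<open>a < 0\<close> \<open>1 < c\<close> cosh_powr_one_third_less_sinh_div[OF \<open>0 < x\<close>]
    by (intro powr_less_mono2_neg) (auto simp: s_def c_def)
  then have "u < w" and "0 < u"
    using \<open>0 < s\<close> by (simp_all add: u_def w_def powr_powr)
  have "0 < w"
    using \<open>1 < c\<close> by (simp add: w_def)
  have "c powr a = c powr (a/3 + a/3 + a/3)"
    by simp
  also have "\<dots> = w ^ 3"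
    unfolding w_def powr_add by (simp add: power3_eq_cube)
  finally have "c powr a = w ^ 3" .
  have "1 / w < 1 / u"
    using \<open>u < w\<close> \<open>0 < u\<close> by (intro divide_strict_left_mono) auto
  then have "2 * u - 1 / u < 2 * w - 1 / w"
    using \<open>u < w\<close> by linarith
  also have "\<dots> \<le> w ^ 3"
  proof -
    have "w * (w ^ 3 - (2 * w - 1 / w)) = (w\<^sup>2 - 1)\<^sup>2"
      using \<open>0 < w\<close> by (simp add: field_simps power2_eq_square power3_eq_cube)
    then show ?thesis
      using \<open>0 < w\<close> by (metis diff_ge_0_iff_ge zero_le_power2 zero_le_mult_iff not_le)
  qed
  finally show ?thesis
    using H_less_iff[OF \<open>a < 0\<close> \<open>0 < s\<close>, of c] \<open>1 < c\<close> \<open>c powr a = w ^ 3\<close>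
    by (simp add: u_def s_def c_def)
qed

section \<open>The upper bound\<close>

lemma Bernoulli_inequality_powr:
  fixes y k :: real assumes "0 < y" and "1 \<le> k"
  shows "1 + k * (y - 1) \<le> y powr k"
proof -
  have "(y powr k) powr (1/k) * 1 powr (1 - 1/k) \<le> (1/k) * y powr k + (1 - 1/k) * 1"
    using assms by (intro Youngs_inequality_0) auto
  then have "y \<le> (1/k) * y powr k + (1 - 1/k)"
    using assms by (simp add: powr_powr)
  then have "k * y \<le> k * ((1/k) * y powr k + (1 - 1/k))"
    using assms by (intro mult_left_mono) auto
  also have "\<dots> = y powr k + k - 1"
    using assms by (simp add: field_simps)
  finally
  show ?thesis
    by (simp add: algebra_simps)
qed

lemma two_sub_inverse_powr_le:
  fixes u k :: real assumes "1 \<le> u" and "1 \<le> k"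
  shows "2 * u powr k - 1 / u powr k \<le> (2 * u - 1 / u) powr k"
proof -
  define z where "z = 1 / u\<^sup>2"
  have "0 < z" "z \<le> 1"
    using assms by (auto simp: z_def field_simps)
  have sum_ge: "2 \<le> z powr k + (2 - z) powr k"
    using Bernoulli_inequality_powr[of z k] Bernoulli_inequality_powr[of "2 - z" k]
      \<open>0 < z\<close> \<open>z \<le> 1\<close> assms(2) by (simp add: algebra_simps)
  have z_powr: "z powr k = 1 / (u powr k)\<^sup>2"
    using assms by (simp add: z_def powr_divide powr_mult power2_eq_square)
  have "2 * u powr k - 1 / u powr k = u powr k * (2 - 1 / (u powr k)\<^sup>2)"
    using assms by (simp add: field_simps power2_eq_square)
  also have "\<dots> \<le> u powr k * (2 - z) powr k"
    using sum_ge z_powr assms by (intro mult_left_mono) auto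
  also have "\<dots> = (u * (2 - z)) powr k"
    using assms \<open>z \<le> 1\<close> by (simp add: powr_mult)
  also have "u * (2 - z) = 2 * u - 1 / u"
    using assms by (simp add: z_def field_simps power2_eq_square)
  finally show ?thesis .
qed

lemma three_fifths_numerator_pos:
  fixes x w :: real assumes "0 < x" and "(6 * sinh x - x) / (5 * x) \<le> w"
  shows "x * ((sinh x)\<^sup>2 + (cosh x)\<^sup>2) - sinh x * cosh x < 2 * w * (sinh x * cosh x - x)"
proof -
  have "sinh x * 1 \<le> sinh x * cosh x"
    using assms cosh_real_ge_1[of x] by (intro mult_left_mono) auto
  then have "0 < sinh x * cosh x - x"
    using less_sinh_real[OF \<open>0 < x\<close>] by simp
  have "x * ((sinh x)\<^sup>2 + (cosh x)\<^sup>2) - sinh x * cosh x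
      < 2 * ((6 * sinh x - x) / (5 * x)) * (sinh x * cosh x - x)"
    using key_sinh_cosh_inequality[OF \<open>0 < x\<close>] \<open>0 < x\<close> by (simp add: field_simps)
  also have "\<dots> \<le> 2 * w * (sinh x * cosh x - x)"
    using assms(2) \<open>0 < sinh x * cosh x - x\<close> by (intro mult_right_mono mult_left_mono) auto
  finally show ?thesis .
qed

lemma sinh_div_powr_six_fifths_ge:
  fixes x :: real assumes "0 < x"
  shows "(6 * sinh x - x) / (5 * x) \<le> (sinh x / x) powr (6/5)"
    and "1 < (6 * sinh x - x) / (5 * x)"
proof -
  have "1 < sinh x / x"
    using less_sinh_real[OF assms] assms by simp
  then have "1 + 6/5 * (sinh x / x - 1) \<le> (sinh x / x) powr (6/5)"
    by (intro Bernoulli_inequality_powr) auto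
  then show "(6 * sinh x - x) / (5 * x) \<le> (sinh x / x) powr (6/5)"
    using assms by (simp add: field_simps)
  show "1 < (6 * sinh x - x) / (5 * x)"
    using less_sinh_real[OF assms] assms by (simp add: field_simps)
qed

lemma ln_two_sinh_div_powr_six_fifths_less:
  fixes x :: real assumes "0 < x"
  shows "ln (2 * (sinh x / x) powr (6/5) - 1) < 3/5 * ln (sinh x / x * cosh x)"
proof -
  define W where "W = (\<lambda>y::real. exp (6/5 * (ln (sinh y) - ln y)))"
  have W_eq: "W y = (sinh y / y) powr (6/5)" if "0 < y" for y
    using that by (simp add: W_def powr_def ln_div)
  have "0 < 3/5 * (ln (cosh x) + ln (sinh x) - ln x) - ln (2 * W x - 1)"
  proof (rule pos_if_deriv_pos_and_tendsto_0_at_right[OF _ _ _ assms])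
    fix y :: real assume "0 < y"
    define S C where "S = sinh y" and "C = cosh y"
    have "0 < S" "0 < C" "C\<^sup>2 = S\<^sup>2 + 1"
      using \<open>0 < y\<close> cosh_square_eq[of y] by (simp_all add: S_def C_def)
    have W_ge: "(6 * S - y) / (5 * y) \<le> W y" and "1 < W y"
      using sinh_div_powr_six_fifths_ge[OF \<open>0 < y\<close>] W_eq[OF \<open>0 < y\<close>] by (simp_all add: S_def)
    have "0 < 2 * W y - 1"
      using \<open>1 < W y\<close> by simp
    then have "((\<lambda>x. 3/5 * (ln (cosh x) + ln (sinh x) - ln x) - ln (2 * W x - 1)) has_real_derivative
        3/5 * (S / C + C / S - 1 / y) - 2 * W y * (6/5 * (C / S - 1 / y)) / (2 * W y - 1)) (at y)"
      using \<open>0 < y\<close> unfolding W_def S_def C_def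
      by (auto intro!: derivative_eq_intros simp: field_simps)
    moreover have "3/5 * (S / C + C / S - 1 / y) - 2 * W y * (6/5 * (C / S - 1 / y)) / (2 * W y - 1)
        = 3/5 * ((2 * W y * (S * C - y) - (y * (S\<^sup>2 + C\<^sup>2) - S * C)) / (y * S * C * (2 * W y - 1)))"
      using \<open>0 < y\<close> \<open>0 < S\<close> \<open>0 < C\<close> \<open>1 < W y\<close>
      by (simp add: field_simps power2_eq_square) (use \<open>C\<^sup>2 = S\<^sup>2 + 1\<close> in algebra)
    ultimately show "((\<lambda>x. 3/5 * (ln (cosh x) + ln (sinh x) - ln x) - ln (2 * W x - 1))
        has_real_derivative 3/5 * ((2 * W y * (S * C - y) - (y * (S\<^sup>2 + C\<^sup>2) - S * C))
          / (y * S * C * (2 * W y - 1)))) (at y)"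
      by simp
    have "y * (S\<^sup>2 + C\<^sup>2) - S * C < 2 * W y * (S * C - y)"
      using three_fifths_numerator_pos[OF \<open>0 < y\<close> W_ge[unfolded S_def]] by (simp add: S_def C_def)
    then show "0 < 3/5 * ((2 * W y * (S * C - y) - (y * (S\<^sup>2 + C\<^sup>2) - S * C))
          / (y * S * C * (2 * W y - 1)))"
      using \<open>0 < y\<close> \<open>0 < S\<close> \<open>0 < C\<close> \<open>1 < W y\<close> by (simp add: zero_less_divide_iff)
  next
    show "((\<lambda>x. 3/5 * (ln (cosh x) + ln (sinh x) - ln x) - ln (2 * W x - 1)) \<longlongrightarrow> 0) (at_right 0)"
      unfolding W_def by real_asymp
  qed
  then show ?thesis
    using assms by (simp add: W_eq ln_mult ln_div algebra_simps)
qed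

lemma sinh_div_three_fifths_bound:
  fixes x :: real assumes "0 < x"
  shows "2 * (sinh x / x) powr (3/5) - 1 / (sinh x / x) powr (3/5) < cosh x powr (3/5)"
proof -
  define u where "u = (sinh x / x) powr (3/5)"
  have "1 < u"
    using less_sinh_real[OF assms] assms by (simp add: u_def)
  then have "1 < u\<^sup>2"
    by (simp add: one_less_power)
  have "(sinh x / x) powr (6/5) = u\<^sup>2"
    by (simp add: u_def power2_eq_square flip: powr_add)
  then have "ln (2 * u\<^sup>2 - 1) < ln ((sinh x / x * cosh x) powr (3/5))"
    using ln_two_sinh_div_powr_six_fifths_less[OF assms] assms by (simp add: ln_powr)
  moreover have "0 < 2 * u\<^sup>2 - 1"
    using \<open>1 < u\<^sup>2\<close> by simp
  moreover have "0 < (sinh x / x * cosh x) powr (3/5)"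
    using assms by simp
  ultimately have "2 * u\<^sup>2 - 1 < (sinh x / x * cosh x) powr (3/5)"
    by (metis ln_less_cancel_iff)
  also have "\<dots> = u * cosh x powr (3/5)"
    unfolding u_def by (rule powr_mult)
  finally have "2 * u\<^sup>2 - 1 < u * cosh x powr (3/5)" .
  then show ?thesis
    using \<open>1 < u\<close> by (simp add: u_def[symmetric] field_simps power2_eq_square)
qed

lemma sinh_div_less_H_of_ge:
  fixes b x :: real assumes "3/5 \<le> b" and "0 < x"
  shows "sinh x / x < H b (cosh x)"
proof -
  define s where "s = sinh x / x"
  define u where "u = s powr (3/5)"
  have "1 < s"
    using less_sinh_real[OF \<open>0 < x\<close>] \<open>0 < x\<close> by (simp add: s_def)
  then have "1 \<le> u"
    by (simp add: u_def ge_one_powr_ge_zero)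
  then have "1 / u \<le> 1"
    by simp
  with \<open>1 \<le> u\<close> have "1 \<le> 2 * u - 1 / u"
    by linarith
  have "2 * s powr b - 1 / s powr b = 2 * u powr (5/3 * b) - 1 / u powr (5/3 * b)"
    by (simp add: u_def powr_powr)
  also have "\<dots> \<le> (2 * u - 1 / u) powr (5/3 * b)"
    using \<open>1 \<le> u\<close> \<open>3/5 \<le> b\<close> by (intro two_sub_inverse_powr_le) auto
  also have "\<dots> < (cosh x powr (3/5)) powr (5/3 * b)"
    using sinh_div_three_fifths_bound[OF \<open>0 < x\<close>] \<open>1 \<le> 2 * u - 1 / u\<close> \<open>3/5 \<le> b\<close>
    by (intro powr_less_mono2) (auto simp: u_def s_def)
  also have "\<dots> = cosh x powr b"
    by (simp add: powr_powr)
  finally show ?thesis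
    using less_H_iff[of b s "cosh x"] \<open>1 < s\<close> \<open>3/5 \<le> b\<close> by (simp add: s_def)
qed

section \<open>Sharpness of the bounds\<close>

lemma exists_not_H_less_sinh_div:
  fixes a :: real assumes "0 < a"
  shows "\<exists>x>0. \<not> H a (cosh x) < sinh x / x"
proof -
  define x where "x = 2 powr (1/a) + 1"
  define s where "s = sinh x / x"
  have "0 < x" "0 < s"
    by (simp_all add: x_def s_def add_pos_pos)
  have "2 powr (1/a) * s \<le> sinh x"
    using \<open>0 < x\<close> by (simp add: s_def x_def field_simps)
  also have "\<dots> < cosh x"
    by (rule sinh_less_cosh_real)
  finally have "(2 powr (1/a) * s) powr a \<le> cosh x powr a"
    using \<open>0 < a\<close> \<open>0 < s\<close> by (intro powr_mono2) auto
  then have "2 * s powr a \<le> cosh x powr a"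
    using \<open>0 < a\<close> by (simp add: powr_mult powr_powr)
  moreover have "0 < 1 / s powr a"
    using \<open>0 < s\<close> by simp
  ultimately have "2 * s powr a - 1 / s powr a < cosh x powr a"
    by linarith
  then have "s < H a (cosh x)"
    using less_H_iff[OF \<open>0 < a\<close> \<open>0 < s\<close>] by simp
  then show ?thesis
    using \<open>0 < x\<close> by (auto simp: s_def)
qed

lemma exists_not_sinh_div_less_H:
  fixes b :: real assumes "0 < b" and "b < 3/5"
  shows "\<exists>x>0. \<not> sinh x / x < H b (cosh x)"
proof -
  have "((\<lambda>x. (2 * ((sinh x / x) powr b)\<^sup>2 - (sinh x / x) powr b * cosh x powr b - 1) / x ^ 4)
          \<longlongrightarrow> b * (3 - 5 * b) / 45) (at_right 0)"
    by real_asymp (simp add: field_simps)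
  moreover have "0 < b * (3 - 5 * b) / 45"
    using assms by simp
  ultimately have "eventually (\<lambda>x. 0 < (2 * ((sinh x / x) powr b)\<^sup>2 - (sinh x / x) powr b * cosh x powr b - 1) / x ^ 4)
      (at_right 0)"
    by (rule order_tendstoD)
  moreover have "eventually (\<lambda>x. 0 < x) (at_right (0::real))"
    by (simp add: eventually_at_right_less)
  ultimately obtain x where "0 < x" and "0 < (2 * ((sinh x / x) powr b)\<^sup>2 - (sinh x / x) powr b * cosh x powr b - 1) / x ^ 4"
    using eventually_happens'[OF trivial_limit_at_right_real] eventually_conj by blast
  define s where "s = sinh x / x"
  have "0 < s" using \<open>0 < x\<close> by (simp add: s_def)
  have "1 < 2 * (s powr b)\<^sup>2 - s powr b * cosh x powr b"
    using \<open>0 < (2 * _ - _ - 1) / x ^ 4\<close> \<open>0 < x\<close>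
    by (simp add: s_def zero_less_divide_iff)
  then have "\<not> 2 * s powr b - 1 / s powr b < cosh x powr b"
    using \<open>0 < s\<close> by (simp add: field_simps power2_eq_square)
  then show ?thesis
    using less_H_iff[OF \<open>0 < b\<close> \<open>0 < s\<close>] \<open>0 < x\<close> by (auto simp: s_def)
qed

theorem corollary4p8:
  fixes \<alpha> \<beta> :: real
  shows "(\<forall>x::real. x > 0 \<longrightarrow>
            H \<alpha> (cosh x) < sinh x / x \<and> sinh x / x < H \<beta> (cosh x))
         \<longleftrightarrow> (\<alpha> \<le> 0 \<and> \<beta> \<ge> 3/5)"
proof
  assume bounds: "\<forall>x::real. x > 0 \<longrightarrow> H \<alpha> (cosh x) < sinh x / x \<and> sinh x / x < H \<beta> (cosh x)"
  have "\<alpha> \<le> 0"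
    using bounds exists_not_H_less_sinh_div[of \<alpha>] by (meson not_le)
  moreover have "3/5 \<le> \<beta>"
  proof (rule ccontr)
    assume "\<not> 3/5 \<le> \<beta>"
    then consider "\<beta> \<le> 0" | "0 < \<beta>" "\<beta> < 3/5"
      by linarith
    then show False
    proof cases
      case 1
      then have "H \<beta> (cosh 1) < sinh 1 / 1"
        by (intro H_less_sinh_div_of_nonpos) simp_all
      moreover have "sinh 1 / 1 < H \<beta> (cosh 1)"
        using bounds zero_less_one by blast
      ultimately show False
        by linarith
    next
      case 2
      then show False
        using bounds exists_not_sinh_div_less_H[of \<beta>] by blast
    qed
  qed
  ultimately show "\<alpha> \<le> 0 \<and> \<beta> \<ge> 3/5"
    by simp
next
  assume "\<alpha> \<le> 0 \<and> \<beta> \<ge> 3/5"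
  then show "\<forall>x::real. x > 0 \<longrightarrow> H \<alpha> (cosh x) < sinh x / x \<and> sinh x / x < H \<beta> (cosh x)"
    using H_less_sinh_div_of_nonpos sinh_div_less_H_of_ge by blast
qed

end
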